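(* Let $(\hat\sigma(n))_{n\ge0}$ be the sequence of rationals defined by $\hat\sigma(0)=1$, $\hat\sigma(1)=-\tfrac13$, and for $n\ge1$: $\hat\sigma(2n)=\hat\sigma(n)$, $\hat\sigma(2n+1)=-\tfrac12(\hat\sigma(n)+\hat\sigma(n+1))$. Then for all natural numbers $n,a\ge1$, $$\hat\sigma(2^an+1)=\Big(-\frac12\Big)^a\Big(\hat\sigma(n+1)+\frac13\hat\sigma(n)\Big)-\frac13\hat\sigma(n).$$ *)

theory Defs
  imports Complex_Main
begin

function sighat :: "nat \<Rightarrow> rat" where
  "sighat n = (if n = 0 then 1
               else if n = 1 then -1/3
               else if even n then sighat (n div 2)
               else -(1/2) * (sighat (n div 2) + sighat (n div 2 + 1)))"
  by auto
termination
  by (relation "measure id") (auto elim!: oddE)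

lemma sighat_0: "sighat 0 = 1" by simp
lemma sighat_1: "sighat 1 = -1/3" by simp
lemma sighat_even: "n \<ge> 1 \<Longrightarrow> sighat (2*n) = sighat n" by simp
lemma sighat_odd: "n \<ge> 1 \<Longrightarrow> sighat (2*n+1) = -(1/2) * (sighat n + sighat (n+1))" by simp

end

theory Submission
  imports Defs
begin

(* Doubling a positive argument does not change sighat, so the odd-step recurrence
   at 2^(a+1) n + 1 reads  s(a+1) = -1/2 (sighat n + s(a))  for s(a) = sighat (2^a n + 1).
   This affine recurrence has fixed point -sighat n / 3, and its deviation from the fixed
   point is multiplied by -1/2 at each step. *)

lemma sighat_pow2_mult:
  assumes "n \<ge> 1"
  shows "sighat (2^a * n) = sighat n"
proof (induction a)
  case 0
  then show ?case by simp
next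
  case (Suc a)
  have "sighat (2 * (2^a * n)) = sighat (2^a * n)"
    using assms by (intro sighat_even) simp
  then show ?case using Suc.IH by (simp add: mult.assoc)
qed

lemma sighat_pow2_mult_Suc:
  assumes "n \<ge> 1"
  shows "sighat (2^Suc a * n + 1) = -(1/2) * (sighat n + sighat (2^a * n + 1))"
proof -
  have "sighat (2 * (2^a * n) + 1) = -(1/2) * (sighat (2^a * n) + sighat (2^a * n + 1))"
    using assms by (intro sighat_odd) simp
  then show ?thesis
    using sighat_pow2_mult[OF assms] by (simp add: mult.assoc)
qed

theorem lemma4p1:
  fixes n a :: nat
  assumes "n \<ge> 1" and "a \<ge> 1"
  shows "sighat (2^a * n + 1) = (-(1/2))^a * (sighat (n+1) + (1/3) * sighat n) - (1/3) * sighat n"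
proof (induction a)
  case 0
  then show ?case by simp
next
  case (Suc a)
  have "sighat (2^Suc a * n + 1) = -(1/2) * (sighat n + sighat (2^a * n + 1))"
    using assms(1) by (rule sighat_pow2_mult_Suc)
  then show ?case using Suc.IH by (simp add: algebra_simps)
qed

end
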